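(* Let $m>3$ be an odd integer, let $G=\mathbb{Z}_{2m}$ and $H=\{0,m\}\le G$. For $1\le i\le\frac{m-1}{2}$ let $S_i=\{i,m-i,m+i,2m-i\}\subseteq\mathbb{Z}_{2m}$. Then the family $\{S_i:1\le i\le \frac{m-1}{2}\}$ partitions $G\setminus H$ and is a $(2m,\frac{m-1}{2},4,2,2m-2)$-DPDF and a $(2m,\frac{m-1}{2},4,2m-6,0)$-EPDF in $G$.
   Context: In an additive group $G$ with identity $0$, let $G^*=G\setminus\{0\}$. For $D\subseteq G$, $\Delta(D)$ is the multiset $\{x-y:x,y\in D,x\ne y\}$; for $D_1,D_2\subseteq G$, $\Delta(D_1,D_2)$ is the multiset $\{x-y:x\in D_1,y\in D_2\}$. For a family $A=\{A_1,\dots,A_s\}$ of pairwise disjoint subsets, ${\rm Int}(A)=\bigcup_i\Delta(A_i)$ and ${\rm Ext}(A)=\bigcup_{i\ne j}\Delta(A_i,A_j)$ (multiset unions). For $|G|=v$, a $(v,s,k,\lambda,\mu)$-DPDF is a family of $s$ pairwise disjoint $k$-subsets of $G^*$ with union $S$ such that ${\rm Int}(A)$ contains each element of $S$ exactly $\lambda$ times and each element of $G\setminus(S\cup\{0\})$ exactly $\mu$ times; a $(v,s,k,\lambda,\mu)$-EPDF is defined the same way using ${\rm Ext}(A)$. A family partitions a set $X$ if its members are pairwise disjoint with union $X$. *)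

theory Defs
  imports Main
begin

text \<open>The cyclic group Z_n is represented by the integers 0..n-1, with the group
difference x - y taken modulo n; its identity is 0 and G* = {1..<n}.\<close>

text \<open>Multiplicity of g in Int(A) = multiset union of Delta(A_i).\<close>
definition int_mult :: "int \<Rightarrow> int set set \<Rightarrow> int \<Rightarrow> nat" where
  "int_mult n A g =
     (\<Sum>D\<in>A. card {(x, y). x \<in> D \<and> y \<in> D \<and> x \<noteq> y \<and> (x - y) mod n = g})"

text \<open>Multiplicity of g in Ext(A) = multiset union of Delta(A_i, A_j), i \<noteq> j.\<close>
definition ext_mult :: "int \<Rightarrow> int set set \<Rightarrow> int \<Rightarrow> nat" where
  "ext_mult n A g =
     (\<Sum>D1\<in>A. \<Sum>D2\<in>A - {D1}. card {(x, y). x \<in> D1 \<and> y \<in> D2 \<and> (x - y) mod n = g})"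

definition pdf_family :: "int \<Rightarrow> nat \<Rightarrow> nat \<Rightarrow> int set set \<Rightarrow> bool" where
  "pdf_family n s k A \<longleftrightarrow> finite A \<and> card A = s \<and> pairwise disjnt A \<and>
     (\<forall>D\<in>A. D \<subseteq> {1..<n} \<and> card D = k)"

definition is_DPDF :: "int \<Rightarrow> nat \<Rightarrow> nat \<Rightarrow> nat \<Rightarrow> nat \<Rightarrow> int set set \<Rightarrow> bool" where
  "is_DPDF n s k lam mu A \<longleftrightarrow> pdf_family n s k A \<and>
     (\<forall>g\<in>\<Union>A. int_mult n A g = lam) \<and>
     (\<forall>g\<in>{0..<n} - (\<Union>A \<union> {0}). int_mult n A g = mu)"

definition is_EPDF :: "int \<Rightarrow> nat \<Rightarrow> nat \<Rightarrow> nat \<Rightarrow> nat \<Rightarrow> int set set \<Rightarrow> bool" where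
  "is_EPDF n s k lam mu A \<longleftrightarrow> pdf_family n s k A \<and>
     (\<forall>g\<in>\<Union>A. ext_mult n A g = lam) \<and>
     (\<forall>g\<in>{0..<n} - (\<Union>A \<union> {0}). ext_mult n A g = mu)"

definition partitions :: "'a set \<Rightarrow> 'a set set \<Rightarrow> bool" where
  "partitions X A \<longleftrightarrow> pairwise disjnt A \<and> \<Union>A = X"

end

(* The block S_i is the fibre over i of the absolute least residue |x|_m = min (x mod m) (m - x mod m)
   on G - H, the nonmultiples of m in Z_2m.  Hence Int(A) counts the pairs (x, x - g) in G - H lying in
   a common fibre and Ext(A) those lying in different fibres.  For g = m every x pairs with x - m in its
   own fibre.  For g outside H, |x|_m = |x - g|_m means x = -(x - g) mod m, i.e. 2x = g mod m; as m is
   odd this fixes x mod m, which gives exactly two x in Z_2m, while 2m - 4 elements x have both x and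
   x - g in G - H. *)
theory Submission
  imports Defs
begin

lemma pairwise_disjnt_unique:
  "pairwise disjnt A \<Longrightarrow> D \<in> A \<Longrightarrow> D' \<in> A \<Longrightarrow> x \<in> D \<Longrightarrow> x \<in> D' \<Longrightarrow> D = D'"
  by (meson disjnt_iff pairwiseD)

lemma int_mult_eq_card_pairs:
  assumes "finite A" "\<And>D. D \<in> A \<Longrightarrow> finite D" "pairwise disjnt A"
  shows "int_mult n A g = card {(x, y). \<exists>D\<in>A. x \<in> D \<and> y \<in> D \<and> x \<noteq> y \<and> (x - y) mod n = g}"
proof -
  define P where "P D = {(x, y). x \<in> D \<and> y \<in> D \<and> x \<noteq> y \<and> (x - y) mod n = g}" for D
  have "int_mult n A g = card (\<Union>D\<in>A. P D)"
    unfolding int_mult_def P_def[symmetric]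
  proof (rule card_UN_disjoint[symmetric])
    show "\<forall>D\<in>A. finite (P D)"
      using assms(2) by (auto intro: finite_subset[of _ "_ \<times> _"] simp: P_def)
    show "\<forall>D\<in>A. \<forall>D'\<in>A. D \<noteq> D' \<longrightarrow> P D \<inter> P D' = {}"
      using pairwise_disjnt_unique[OF assms(3)] by (fastforce simp: P_def)
  qed (fact assms(1))
  also have "(\<Union>D\<in>A. P D) = {(x, y). \<exists>D\<in>A. x \<in> D \<and> y \<in> D \<and> x \<noteq> y \<and> (x - y) mod n = g}"
    by (auto simp: P_def)
  finally show ?thesis .
qed

lemma ext_mult_eq_card_pairs:
  assumes "finite A" "\<And>D. D \<in> A \<Longrightarrow> finite D" "pairwise disjnt A"
  shows "ext_mult n A g =
    card {(x, y). \<exists>D1\<in>A. \<exists>D2\<in>A. D1 \<noteq> D2 \<and> x \<in> D1 \<and> y \<in> D2 \<and> (x - y) mod n = g}"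
proof -
  define Q where "Q p = {(x, y). x \<in> fst p \<and> y \<in> snd p \<and> (x - y) mod n = g}" for p
  let ?B = "SIGMA D1:A. A - {D1}"
  have "ext_mult n A g = (\<Sum>p\<in>?B. card (Q p))"
    unfolding ext_mult_def Q_def using assms(1) by (simp add: sum.Sigma split_def)
  also have "\<dots> = card (\<Union>p\<in>?B. Q p)"
  proof (rule card_UN_disjoint[symmetric])
    show "finite ?B" using assms(1) by auto
    show "\<forall>p\<in>?B. finite (Q p)"
      using assms(2) by (auto intro: finite_subset[of _ "_ \<times> _"] simp: Q_def)
    show "\<forall>p\<in>?B. \<forall>q\<in>?B. p \<noteq> q \<longrightarrow> Q p \<inter> Q q = {}"
      using pairwise_disjnt_unique[OF assms(3)] by (fastforce simp: Q_def prod_eq_iff)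
  qed
  also have "(\<Union>p\<in>?B. Q p) =
      {(x, y). \<exists>D1\<in>A. \<exists>D2\<in>A. D1 \<noteq> D2 \<and> x \<in> D1 \<and> y \<in> D2 \<and> (x - y) mod n = g}"
    by (force simp: Q_def)
  finally show ?thesis .
qed

lemma int_mult_plus_ext_mult:
  assumes "finite A" "\<And>D. D \<in> A \<Longrightarrow> finite D" "pairwise disjnt A"
  shows "int_mult n A g + ext_mult n A g =
    card {(x, y). x \<in> \<Union>A \<and> y \<in> \<Union>A \<and> x \<noteq> y \<and> (x - y) mod n = g}"
proof -
  let ?same = "{(x, y). \<exists>D\<in>A. x \<in> D \<and> y \<in> D \<and> x \<noteq> y \<and> (x - y) mod n = g}"
  let ?diff = "{(x, y). \<exists>D1\<in>A. \<exists>D2\<in>A. D1 \<noteq> D2 \<and> x \<in> D1 \<and> y \<in> D2 \<and> (x - y) mod n = g}"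
  have fin: "finite (\<Union>A \<times> \<Union>A)" using assms(1,2) by auto
  note unique = pairwise_disjnt_unique[OF assms(3)]
  have "?same \<union> ?diff = {(x, y). x \<in> \<Union>A \<and> y \<in> \<Union>A \<and> x \<noteq> y \<and> (x - y) mod n = g}"
  proof (intro equalityI subsetI)
    fix p assume "p \<in> {(x, y). x \<in> \<Union>A \<and> y \<in> \<Union>A \<and> x \<noteq> y \<and> (x - y) mod n = g}"
    then obtain x y D1 D2 where "p = (x, y)" "D1 \<in> A" "D2 \<in> A" "x \<in> D1" "y \<in> D2"
      "x \<noteq> y" "(x - y) mod n = g" by blast
    then show "p \<in> ?same \<union> ?diff" by (cases "D1 = D2") auto
  qed (fastforce dest: unique)
  moreover have "?same \<inter> ?diff = {}"
  proof -
    have False if "D \<in> A" "x \<in> D" "y \<in> D" "D1 \<in> A" "D2 \<in> A" "D1 \<noteq> D2" "x \<in> D1" "y \<in> D2"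
      for x y :: int and D D1 D2
      using that unique[of D D1 x] unique[of D D2 y] by simp
    then show ?thesis by blast
  qed
  moreover have "finite ?same" "finite ?diff"
    by (rule finite_subset[OF _ fin]; blast)+
  ultimately show ?thesis
    using card_Un_disjoint[of ?same ?diff]
    by (simp add: int_mult_eq_card_pairs[OF assms] ext_mult_eq_card_pairs[OF assms])
qed

definition fibres :: "('a \<Rightarrow> 'b) \<Rightarrow> 'a set \<Rightarrow> 'a set set" where
  "fibres c X = (\<lambda>i. {x \<in> X. c x = i}) ` c ` X"

lemma pairwise_disjnt_fibres: "pairwise disjnt (fibres c X)"
  unfolding fibres_def pairwise_def disjnt_def by auto

lemma Union_fibres: "\<Union>(fibres c X) = X"
  unfolding fibres_def by auto

lemma finite_fibres: "finite X \<Longrightarrow> finite (fibres c X)"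
  unfolding fibres_def by simp

lemma finite_mem_fibres: "finite X \<Longrightarrow> D \<in> fibres c X \<Longrightarrow> finite D"
  unfolding fibres_def by auto

lemma card_fibres: "card (fibres c X) = card (c ` X)"
  unfolding fibres_def by (rule card_image) (fastforce intro!: inj_onI)

lemma int_mult_fibres:
  assumes "finite X"
  shows "int_mult n (fibres c X) g = card {(x, y). x \<in> X \<and> y \<in> X \<and> c x = c y \<and> x \<noteq> y \<and> (x - y) mod n = g}"
proof -
  have "int_mult n (fibres c X) g =
      card {(x, y). \<exists>D\<in>fibres c X. x \<in> D \<and> y \<in> D \<and> x \<noteq> y \<and> (x - y) mod n = g}"
    by (rule int_mult_eq_card_pairs[OF finite_fibres[OF assms] finite_mem_fibres[OF assms] pairwise_disjnt_fibres])
  also have "{(x, y). \<exists>D\<in>fibres c X. x \<in> D \<and> y \<in> D \<and> x \<noteq> y \<and> (x - y) mod n = g} =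
      {(x, y). x \<in> X \<and> y \<in> X \<and> c x = c y \<and> x \<noteq> y \<and> (x - y) mod n = g}"
    by (auto simp: fibres_def)
  finally show ?thesis .
qed

lemma int_mult_plus_ext_mult_fibres:
  assumes "finite X"
  shows "int_mult n (fibres c X) g + ext_mult n (fibres c X) g =
    card {(x, y). x \<in> X \<and> y \<in> X \<and> x \<noteq> y \<and> (x - y) mod n = g}"
  using int_mult_plus_ext_mult[OF finite_fibres[OF assms] finite_mem_fibres[OF assms] pairwise_disjnt_fibres]
  by (simp add: Union_fibres)

lemma card_pairs_mod_diff:
  fixes X :: "int set" and n g :: int
  assumes "X \<subseteq> {0..<n}" "0 < g" "g < n"
  shows "card {(x, y). x \<in> X \<and> y \<in> X \<and> R x y \<and> x \<noteq> y \<and> (x - y) mod n = g}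
    = card {x \<in> X. (x - g) mod n \<in> X \<and> R x ((x - g) mod n)}"
proof -
  have diff_iff: "x \<noteq> y \<and> (x - y) mod n = g \<longleftrightarrow> y = (x - g) mod n" if "y \<in> X" for x y
  proof
    assume "x \<noteq> y \<and> (x - y) mod n = g"
    then have "(x - g) mod n = (x - (x - y)) mod n" by (metis mod_diff_right_eq)
    then show "y = (x - g) mod n" using that assms(1) by auto
  next
    assume "y = (x - g) mod n"
    then have "(x - y) mod n = (x - (x - g)) mod n" by (metis mod_diff_right_eq)
    then show "x \<noteq> y \<and> (x - y) mod n = g" using assms(2,3) by auto
  qed
  have "{(x, y). x \<in> X \<and> y \<in> X \<and> R x y \<and> x \<noteq> y \<and> (x - y) mod n = g}
      = {(x, y). x \<in> X \<and> y \<in> X \<and> R x y \<and> y = (x - g) mod n}"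
    using diff_iff by blast
  also have "\<dots> = (\<lambda>x. (x, (x - g) mod n)) ` {x \<in> X. (x - g) mod n \<in> X \<and> R x ((x - g) mod n)}"
    by auto
  finally show ?thesis by (simp add: card_image inj_on_def)
qed

lemma mod_double_cases:
  fixes x m :: int
  assumes "0 \<le> x" "x < 2 * m"
  shows "x mod m = (if x < m then x else x - m)"
proof (cases "x < m")
  case False
  then have "(x - m) mod m = x - m" using assms by (intro mod_pos_pos_trivial) auto
  then show ?thesis using False by simp
qed (use assms in simp)

lemma mod_double_mod [simp]: "(z mod (2 * m)) mod m = z mod m" for z m :: int
  by (simp add: mod_mod_cancel)

lemma mod_ne_0_iff_mem:
  fixes x m :: int
  assumes "0 < m"
  shows "x mod m \<noteq> 0 \<longleftrightarrow> x mod m \<in> {1..<m}"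
  using pos_mod_sign[OF assms, of x] pos_mod_bound[OF assms, of x] by auto

lemma diff_mod_eq_0_iff: "(x - g) mod m = 0 \<longleftrightarrow> x mod m = g mod m" for x g m :: int
  by (simp add: mod_eq_dvd_iff dvd_eq_mod_eq_0[symmetric])

lemma card_double_residues:
  fixes m :: int
  assumes "0 < m" "R \<subseteq> {0..<m}"
  shows "card {x \<in> {0..<2 * m}. x mod m \<in> R} = 2 * card R"
proof -
  have fin: "finite R" using assms(2) finite_subset by blast
  have "{x \<in> {0..<2 * m}. x mod m \<in> R} = R \<union> (\<lambda>r. r + m) ` R"
  proof
    show "{x \<in> {0..<2 * m}. x mod m \<in> R} \<subseteq> R \<union> (\<lambda>r. r + m) ` R"
    proof
      fix x assume x: "x \<in> {x \<in> {0..<2 * m}. x mod m \<in> R}"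
      show "x \<in> R \<union> (\<lambda>r. r + m) ` R"
      proof (cases "x < m")
        case True
        then show ?thesis using x mod_double_cases[of x m] by auto
      next
        case False
        then have "x - m \<in> R" using x mod_double_cases[of x m] by auto
        then show ?thesis by (auto intro: image_eqI[of _ _ "x - m"])
      qed
    qed
    show "R \<union> (\<lambda>r. r + m) ` R \<subseteq> {x \<in> {0..<2 * m}. x mod m \<in> R}"
      using assms(2) by auto
  qed
  moreover have "R \<inter> (\<lambda>r. r + m) ` R = {}"
  proof -
    have "0 \<le> r" "r < m" if "r \<in> R" for r using that assms(2) by auto
    then show ?thesis by fastforce
  qed
  ultimately show ?thesis using fin by (simp add: card_Un_disjoint card_image)
qed

text \<open>(m + 1) div 2 is the inverse of 2 modulo the odd number m.\<close>
lemma odd_dvd_double_diff_iff: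
  fixes m x g :: int
  assumes "odd m"
  shows "m dvd 2 * x - g \<longleftrightarrow> x mod m = (g * ((m + 1) div 2)) mod m"
proof -
  have "2 * ((m + 1) div 2) = m + 1" using assms by (auto elim: oddE)
  then have eq: "2 * x - g = 2 * (x - g * ((m + 1) div 2)) + g * m" by (simp add: algebra_simps)
  have "m dvd 2 * x - g \<longleftrightarrow> m dvd 2 * (x - g * ((m + 1) div 2))"
    unfolding eq by (rule dvd_add_left_iff) simp
  also have "\<dots> \<longleftrightarrow> m dvd x - g * ((m + 1) div 2)"
    using assms by (intro coprime_dvd_mult_right_iff) simp
  finally show ?thesis by (simp add: mod_eq_dvd_iff)
qed

definition abs_residue :: "int \<Rightarrow> int \<Rightarrow> int" where
  "abs_residue m x = min (x mod m) (m - x mod m)"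

lemma abs_residue_eq_iff:
  assumes "0 < m"
  shows "abs_residue m x = abs_residue m y \<longleftrightarrow> x mod m = y mod m \<or> (x + y) mod m = 0"
proof -
  define a b where "a = x mod m" and "b = y mod m"
  have ab: "0 \<le> a" "a < m" "0 \<le> b" "b < m" using assms by (auto simp: a_def b_def)
  have "(x + y) mod m = (a + b) mod m" by (simp add: a_def b_def mod_add_eq)
  also have "(a + b) mod m = 0 \<longleftrightarrow> a + b = 0 \<or> a + b = m"
  proof (cases "a + b < m")
    case True
    then show ?thesis using ab by simp
  next
    case False
    then have "(a + b - m) mod m = a + b - m" using ab by (intro mod_pos_pos_trivial) auto
    then have "(a + b) mod m = a + b - m" by simp
    then show ?thesis using False ab by simp
  qed
  finally show ?thesis using ab unfolding abs_residue_def a_def[symmetric] b_def[symmetric] by linarith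
qed

lemma abs_residue_eq_iff_mod:
  assumes "0 < m" "0 \<le> i" "2 * i \<le> m"
  shows "abs_residue m x = i \<longleftrightarrow> x mod m = i \<or> x mod m = m - i"
  using assms pos_mod_bound[of m x] pos_mod_sign[of m x] unfolding abs_residue_def by linarith

lemma abs_residue_mod_double [simp]: "abs_residue m (z mod (2 * m)) = abs_residue m z"
  by (simp add: abs_residue_def)

lemma same_abs_residue_shift_iff:
  fixes m g x :: int
  assumes "odd m" "0 < m" "g mod m \<noteq> 0"
  shows "x mod m \<noteq> 0 \<and> (x - g) mod m \<noteq> 0 \<and> abs_residue m x = abs_residue m (x - g)
    \<longleftrightarrow> x mod m = (g * ((m + 1) div 2)) mod m"
proof -
  have g: "\<not> m dvd g" using assms(3) by (simp add: dvd_eq_mod_eq_0)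
  have same: "abs_residue m x = abs_residue m (x - g) \<longleftrightarrow> m dvd 2 * x - g"
    using abs_residue_eq_iff[OF assms(2), of x "x - g"] g by (simp add: mod_eq_dvd_iff dvd_eq_mod_eq_0)
  have "\<not> m dvd x" "\<not> m dvd x - g" if "m dvd 2 * x - g"
    using that g by (metis dvd_diff mult_2 add_diff_cancel_left' diff_diff_eq2)+
  then have "x mod m \<noteq> 0 \<and> (x - g) mod m \<noteq> 0 \<and> abs_residue m x = abs_residue m (x - g)
      \<longleftrightarrow> m dvd 2 * x - g"
    unfolding same by (auto simp only: dvd_eq_mod_eq_0)
  also have "\<dots> \<longleftrightarrow> x mod m = (g * ((m + 1) div 2)) mod m"
    by (rule odd_dvd_double_diff_iff[OF assms(1)])
  finally show ?thesis .
qed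

definition nonmultiples :: "int \<Rightarrow> int set" where
  "nonmultiples m = {x \<in> {0..<2 * m}. x mod m \<noteq> 0}"

lemma finite_nonmultiples: "finite (nonmultiples m)"
  by (auto simp: nonmultiples_def intro: finite_subset[of _ "{0..<2 * m}"])

lemma nonmultiples_subset: "nonmultiples m \<subseteq> {0..<2 * m}"
  by (auto simp: nonmultiples_def)

lemma nonmultiples_eq_Diff:
  fixes m :: int
  assumes "0 < m"
  shows "{0..<2 * m} - {0, m} = nonmultiples m"
proof (rule set_eqI)
  fix x
  show "x \<in> {0..<2 * m} - {0, m} \<longleftrightarrow> x \<in> nonmultiples m"
  proof (cases "0 \<le> x \<and> x < 2 * m")
    case True
    then have "x mod m = (if x < m then x else x - m)" by (intro mod_double_cases) auto
    with True show ?thesis by (auto simp: nonmultiples_def split: if_splits)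
  qed (auto simp: nonmultiples_def)
qed

lemma mod_double_mem_nonmultiples: "0 < m \<Longrightarrow> z mod (2 * m) \<in> nonmultiples m \<longleftrightarrow> z mod m \<noteq> 0"
  by (simp add: nonmultiples_def)

lemma card_nonmultiples:
  fixes m :: int
  assumes "0 < m"
  shows "card (nonmultiples m) = 2 * nat (m - 1)"
proof -
  have "nonmultiples m = {x \<in> {0..<2 * m}. x mod m \<in> {1..<m}}"
    by (simp only: nonmultiples_def mod_ne_0_iff_mem[OF assms])
  then show ?thesis using card_double_residues[OF assms, of "{1..<m}"] by simp
qed

lemma abs_residue_image:
  fixes m :: int
  assumes "odd m" "0 < m"
  shows "abs_residue m ` nonmultiples m = {1..(m - 1) div 2}"
  unfolding nonmultiples_def
proof
  obtain b where b: "m = 2 * b + 1" using assms(1) by (auto elim: oddE)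
  show "abs_residue m ` {x \<in> {0..<2 * m}. x mod m \<noteq> 0} \<subseteq> {1..(m - 1) div 2}"
  proof
    fix i assume "i \<in> abs_residue m ` {x \<in> {0..<2 * m}. x mod m \<noteq> 0}"
    then obtain x where "i = abs_residue m x" "x mod m \<noteq> 0" by auto
    moreover have "0 \<le> x mod m" "x mod m < m" using assms(2) by auto
    ultimately show "i \<in> {1..(m - 1) div 2}" unfolding abs_residue_def b by auto
  qed
  show "{1..(m - 1) div 2} \<subseteq> abs_residue m ` {x \<in> {0..<2 * m}. x mod m \<noteq> 0}"
  proof
    fix i assume "i \<in> {1..(m - 1) div 2}"
    then have "abs_residue m i = i" "i \<in> {x \<in> {0..<2 * m}. x mod m \<noteq> 0}"
      unfolding abs_residue_def b by auto
    then show "i \<in> abs_residue m ` {x \<in> {0..<2 * m}. x mod m \<noteq> 0}" by force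
  qed
qed

lemma abs_residue_fibre:
  fixes m i :: int
  assumes "1 \<le> i" "2 * i < m"
  shows "{x \<in> nonmultiples m. abs_residue m x = i} = {i, m - i, m + i, 2 * m - i}"
  unfolding nonmultiples_def
proof (rule set_eqI)
  fix x
  have iff: "abs_residue m x = i \<longleftrightarrow> x mod m = i \<or> x mod m = m - i"
    using assms by (intro abs_residue_eq_iff_mod) auto
  have "x \<in> {x \<in> {x \<in> {0..<2 * m}. x mod m \<noteq> 0}. abs_residue m x = i} \<longleftrightarrow>
      0 \<le> x \<and> x < 2 * m \<and> (x mod m = i \<or> x mod m = m - i)"
    using assms by (simp only: mem_Collect_eq atLeastLessThan_iff iff) auto
  also have "\<dots> \<longleftrightarrow> x \<in> {i, m - i, m + i, 2 * m - i}"
  proof (cases "0 \<le> x \<and> x < 2 * m")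
    case True
    then have "x mod m = (if x < m then x else x - m)" by (intro mod_double_cases) auto
    with True assms show ?thesis by (cases "x < m") auto
  qed (use assms in auto)
  finally show "x \<in> {x \<in> {x \<in> {0..<2 * m}. x mod m \<noteq> 0}. abs_residue m x = i} \<longleftrightarrow> x \<in> {i, m - i, m + i, 2 * m - i}" .
qed

lemma fibres_abs_residue:
  fixes m :: int
  assumes "odd m" "0 < m"
  shows "fibres (abs_residue m) (nonmultiples m) = (\<lambda>i. {i, m - i, m + i, 2 * m - i}) ` {1..(m - 1) div 2}"
  unfolding fibres_def abs_residue_image[OF assms]
proof (rule image_cong[OF refl])
  fix i assume "i \<in> {1..(m - 1) div 2}"
  then show "{x \<in> nonmultiples m. abs_residue m x = i} = {i, m - i, m + i, 2 * m - i}"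
    by (intro abs_residue_fibre) auto
qed

lemma pdf_family_abs_residue_fibres:
  fixes m :: int
  assumes "odd m" "0 < m"
  shows "pdf_family (2 * m) (nat ((m - 1) div 2)) 4 (fibres (abs_residue m) (nonmultiples m))"
  unfolding pdf_family_def
proof (intro conjI ballI)
  show "finite (fibres (abs_residue m) (nonmultiples m))"
    by (rule finite_fibres[OF finite_nonmultiples])
  show "card (fibres (abs_residue m) (nonmultiples m)) = nat ((m - 1) div 2)"
    by (simp add: card_fibres abs_residue_image[OF assms])
  show "pairwise disjnt (fibres (abs_residue m) (nonmultiples m))"
    by (rule pairwise_disjnt_fibres)
  fix D assume D: "D \<in> fibres (abs_residue m) (nonmultiples m)"
  then show "D \<subseteq> {1..<2 * m}"
    by (auto simp: fibres_def nonmultiples_def order_le_less)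
  from D obtain i where i: "1 \<le> i" "2 * i < m" "D = {i, m - i, m + i, 2 * m - i}"
    unfolding fibres_abs_residue[OF assms] by auto
  then show "card D = 4" by simp
qed

lemma card_diff_pairs_nonmultiples:
  fixes m g :: int
  assumes "0 < m" "g \<in> nonmultiples m"
  shows "card {(x, y). x \<in> nonmultiples m \<and> y \<in> nonmultiples m \<and> x \<noteq> y \<and> (x - y) mod (2 * m) = g}
    = 2 * (nat (m - 1) - 1)"
proof -
  have g: "0 < g" "g < 2 * m" "g mod m \<in> {1..<m}"
    using assms pos_mod_sign[OF assms(1), of g] pos_mod_bound[OF assms(1), of g]
    by (auto simp: nonmultiples_def order_le_less)
  have "card {(x, y). x \<in> nonmultiples m \<and> y \<in> nonmultiples m \<and> x \<noteq> y \<and> (x - y) mod (2 * m) = g}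
      = card {x \<in> nonmultiples m. (x - g) mod (2 * m) \<in> nonmultiples m}"
    using card_pairs_mod_diff[OF nonmultiples_subset g(1,2), of "\<lambda>_ _. True"] by simp
  also have "{x \<in> nonmultiples m. (x - g) mod (2 * m) \<in> nonmultiples m}
      = {x \<in> {0..<2 * m}. x mod m \<in> {1..<m} - {g mod m}}"
    by (simp add: mod_double_mem_nonmultiples[OF assms(1)])
      (auto simp: nonmultiples_def diff_mod_eq_0_iff mod_ne_0_iff_mem[OF assms(1)])
  also have "card \<dots> = 2 * (nat (m - 1) - 1)"
    using g(3) assms(1) by (subst card_double_residues) auto
  finally show ?thesis .
qed

lemma card_half_diff_pairs_nonmultiples:
  fixes m :: int
  assumes "0 < m"
  shows "card {(x, y). x \<in> nonmultiples m \<and> y \<in> nonmultiples m \<and> R x y \<and> x \<noteq> y \<and> (x - y) mod (2 * m) = m}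
    = card {x \<in> nonmultiples m. R x ((x - m) mod (2 * m))}"
proof -
  have "card {(x, y). x \<in> nonmultiples m \<and> y \<in> nonmultiples m \<and> R x y \<and> x \<noteq> y \<and> (x - y) mod (2 * m) = m}
      = card {x \<in> nonmultiples m. (x - m) mod (2 * m) \<in> nonmultiples m \<and> R x ((x - m) mod (2 * m))}"
    using assms by (intro card_pairs_mod_diff) (auto simp: nonmultiples_def)
  also have "{x \<in> nonmultiples m. (x - m) mod (2 * m) \<in> nonmultiples m \<and> R x ((x - m) mod (2 * m))}
      = {x \<in> nonmultiples m. R x ((x - m) mod (2 * m))}"
    using assms by (auto simp: mod_double_mem_nonmultiples) (simp add: nonmultiples_def)
  finally show ?thesis .
qed

lemma int_mult_abs_residue_fibres:
  fixes m g :: int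
  assumes "odd m" "0 < m" "g \<in> nonmultiples m"
  shows "int_mult (2 * m) (fibres (abs_residue m) (nonmultiples m)) g = 2"
proof -
  define c where "c = (g * ((m + 1) div 2)) mod m"
  have g: "0 < g" "g < 2 * m" "g mod m \<noteq> 0" using assms(3) by (auto simp: nonmultiples_def order_le_less)
  have "int_mult (2 * m) (fibres (abs_residue m) (nonmultiples m)) g =
      card {(x, y). x \<in> nonmultiples m \<and> y \<in> nonmultiples m \<and> abs_residue m x = abs_residue m y \<and>
        x \<noteq> y \<and> (x - y) mod (2 * m) = g}"
    by (rule int_mult_fibres[OF finite_nonmultiples])
  also have "\<dots> =
      card {x \<in> nonmultiples m. (x - g) mod (2 * m) \<in> nonmultiples m \<and>
        abs_residue m x = abs_residue m ((x - g) mod (2 * m))}"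
    by (rule card_pairs_mod_diff[where R = "\<lambda>x y. abs_residue m x = abs_residue m y"])
      (use g in \<open>auto simp: nonmultiples_def\<close>)
  also have "{x \<in> nonmultiples m. (x - g) mod (2 * m) \<in> nonmultiples m \<and>
        abs_residue m x = abs_residue m ((x - g) mod (2 * m))} = {x \<in> {0..<2 * m}. x mod m \<in> {c}}"
  proof (rule set_eqI)
    fix x
    have "x \<in> {x \<in> nonmultiples m. (x - g) mod (2 * m) \<in> nonmultiples m \<and>
        abs_residue m x = abs_residue m ((x - g) mod (2 * m))} \<longleftrightarrow>
        x \<in> {0..<2 * m} \<and> x mod m \<noteq> 0 \<and> (x - g) mod m \<noteq> 0 \<and> abs_residue m x = abs_residue m (x - g)"
      by (simp add: mod_double_mem_nonmultiples[OF assms(2)]) (simp add: nonmultiples_def)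
    also have "\<dots> \<longleftrightarrow> x \<in> {x \<in> {0..<2 * m}. x mod m \<in> {c}}"
      using same_abs_residue_shift_iff[OF assms(1,2) g(3)] by (simp add: c_def)
    finally show "x \<in> {x \<in> nonmultiples m. (x - g) mod (2 * m) \<in> nonmultiples m \<and>
        abs_residue m x = abs_residue m ((x - g) mod (2 * m))} \<longleftrightarrow> x \<in> {x \<in> {0..<2 * m}. x mod m \<in> {c}}" .
  qed
  also have "card \<dots> = 2" using assms(2) by (subst card_double_residues) (auto simp: c_def)
  finally show ?thesis .
qed

lemma int_mult_abs_residue_fibres_half:
  fixes m :: int
  assumes "0 < m"
  shows "int_mult (2 * m) (fibres (abs_residue m) (nonmultiples m)) m = nat (2 * m - 2)"
proof -
  have "abs_residue m ((x - m) mod (2 * m)) = abs_residue m x" for x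
    by (simp add: abs_residue_def)
  then have "int_mult (2 * m) (fibres (abs_residue m) (nonmultiples m)) m = card (nonmultiples m)"
    by (simp add: int_mult_fibres finite_nonmultiples card_half_diff_pairs_nonmultiples[OF assms])
  then show ?thesis using card_nonmultiples[OF assms] by simp
qed

lemma ext_mult_abs_residue_fibres:
  fixes m g :: int
  assumes "odd m" "0 < m" "g \<in> nonmultiples m"
  shows "ext_mult (2 * m) (fibres (abs_residue m) (nonmultiples m)) g = nat (2 * m - 6)"
  using int_mult_plus_ext_mult_fibres[OF finite_nonmultiples[of m], of "2 * m" "abs_residue m" g]
    int_mult_abs_residue_fibres[OF assms] card_diff_pairs_nonmultiples[OF assms(2,3)]
  by simp

lemma ext_mult_abs_residue_fibres_half:
  fixes m :: int
  assumes "0 < m"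
  shows "ext_mult (2 * m) (fibres (abs_residue m) (nonmultiples m)) m = 0"
  using int_mult_plus_ext_mult_fibres[OF finite_nonmultiples[of m], of "2 * m" "abs_residue m" m]
    int_mult_abs_residue_fibres_half[OF assms]
    card_half_diff_pairs_nonmultiples[OF assms, of "\<lambda>_ _. True"] card_nonmultiples[OF assms]
  by simp

theorem mainTheorem4:
  fixes m :: int
  assumes "m > 3" and "odd m"
  defines "S \<equiv> (\<lambda>i::int. {i, m - i, m + i, 2 * m - i})"
  shows "partitions ({0..<2 * m} - {0, m}) (S ` {1..(m - 1) div 2})
    \<and> is_DPDF (2 * m) (nat ((m - 1) div 2)) 4 2 (nat (2 * m - 2)) (S ` {1..(m - 1) div 2})
    \<and> is_EPDF (2 * m) (nat ((m - 1) div 2)) 4 (nat (2 * m - 6)) 0 (S ` {1..(m - 1) div 2})"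
proof -
  have m: "0 < m" using assms(1) by simp
  have family: "S ` {1..(m - 1) div 2} = fibres (abs_residue m) (nonmultiples m)"
    unfolding S_def by (rule fibres_abs_residue[OF assms(2) m, symmetric])
  have rest: "{0..<2 * m} - (nonmultiples m \<union> {0}) = {m}"
    unfolding nonmultiples_eq_Diff[OF m, symmetric] using m by auto
  show ?thesis
    unfolding family partitions_def is_DPDF_def is_EPDF_def nonmultiples_eq_Diff[OF m] Union_fibres rest
    using pdf_family_abs_residue_fibres[OF assms(2) m] pairwise_disjnt_fibres
      int_mult_abs_residue_fibres[OF assms(2) m] int_mult_abs_residue_fibres_half[OF m]
      ext_mult_abs_residue_fibres[OF assms(2) m] ext_mult_abs_residue_fibres_half[OF m]
    by simp
qed

end
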